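(* Let $f:\mathbb{R}^n\to\mathbb{R}$ be convex and continuously differentiable, with $|f(x)-f(y)|\le L_0\|x-y\|$ and $\|\nabla f(x)-\nabla f(y)\|\le L_1\|x-y\|$ for all $x,y$. Let $\tilde f(x;\xi)=f(x)[1+\nu(x;\xi)]$, where $\nu$ is i.i.d. (across all evaluations) with $\mathbb{E}[\nu]=0$, variance $\sigma_r^2>0$, $\mathbb{E}[\frac{1}{1+\nu}]\le b$, and support in $[-a,a]$ for some $a<1$. Given $x_k$ with $f(x_k)\neq0$, draw a standard Gaussian $u_k\in\mathbb{R}^n$ independent of the noise, set $\mu_k=\tilde\mu=C_4\sqrt{|\tilde f(x_k;\xi_{k'})|}$ with $C_4=\left[\frac{16\sigma_r^2 n}{L_1^2(1+3\sigma_r^2)(n+6)^3}\right]^{1/4}$, and $$s_{\tilde\mu}=\frac{\tilde f(x_k+\mu_k u_k;\xi_k)-\tilde f(x_k;\xi_{k-1})}{\mu_k}u_k,$$ where the noise in the three evaluations (indexed by $\xi_{k'},\xi_k,\xi_{k-1}$) is independent. Then $$\mathbb{E}[\|s_{\tilde\mu}\|^2]\le 2(n+4)\|\nabla f(x_k)\|^2+C_5|f(x_k)|+C_6,$$ where the expectation is over $u_k,\xi_k,\xi_{k-1},\xi_{k'}$, and $C_5=\tfrac12 C_4^2L_1^2(n+6)^3+(1+b)L_1\sigma_r\sqrt{(1+3\sigma_r^2)n(n+6)^3}$, $C_6=3L_0^2\sigma_r^2(n+4)^2$.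
   Context: $\|\cdot\|$ is the Euclidean norm; "standard Gaussian" means mean $0$ and covariance $I_n$. *)

theory Defs
  imports "HOL-Probability.Probability"
begin

definition std_gaussian :: "('a::euclidean_space) measure" where
  "std_gaussian = density lborel
     (\<lambda>x. ennreal ((2 * pi) powr (- real DIM('a) / 2) * exp (- (norm x)\<^sup>2 / 2)))"

definition noisy :: "('a \<Rightarrow> real) \<Rightarrow> 'a \<Rightarrow> real \<Rightarrow> real" where
  "noisy f x v = f x * (1 + v)"

definition C4 :: "real \<Rightarrow> real \<Rightarrow> real \<Rightarrow> real" where
  "C4 n L1 \<sigma> = (16 * \<sigma>\<^sup>2 * n / (L1\<^sup>2 * (1 + 3 * \<sigma>\<^sup>2) * (n + 6) ^ 3)) powr (1 / 4)"

definition C5 :: "real \<Rightarrow> real \<Rightarrow> real \<Rightarrow> real \<Rightarrow> real" where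
  "C5 n L1 \<sigma> b = 1 / 2 * (C4 n L1 \<sigma>)\<^sup>2 * L1\<^sup>2 * (n + 6) ^ 3
      + (1 + b) * L1 * \<sigma> * sqrt ((1 + 3 * \<sigma>\<^sup>2) * n * (n + 6) ^ 3)"

definition C6 :: "real \<Rightarrow> real \<Rightarrow> real \<Rightarrow> real" where
  "C6 n L0 \<sigma> = 3 * L0\<^sup>2 * \<sigma>\<^sup>2 * (n + 4)\<^sup>2"

text \<open>The zeroth-order estimator s_mu. Arguments: direction u, noise v1 (xi_{k'},
  used for the smoothing radius), v2 (xi_k), v3 (xi_{k-1}).\<close>
definition zo_est :: "real \<Rightarrow> real \<Rightarrow> real \<Rightarrow> ('a::euclidean_space \<Rightarrow> real) \<Rightarrow> 'a \<Rightarrow> 'a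
    \<Rightarrow> real \<Rightarrow> real \<Rightarrow> real \<Rightarrow> 'a" where
  "zo_est n L1 \<sigma> f x u v1 v2 v3 =
     (let \<mu> = C4 n L1 \<sigma> * sqrt \<bar>noisy f x v1\<bar>
      in ((noisy f (x + \<mu> *\<^sub>R u) v2 - noisy f x v3) / \<mu>) *\<^sub>R u)"

end

theory Submission
  imports Defs
begin

(*
  Condition on the direction u and average over the three noise variables first. The
  evaluation noise in f(x + mu u) and f(x) enters affinely, so its average only contributes
  sigma^2-weighted squares of function values. The remaining finite difference is controlled
  by the Taylor bound for a Lipschitz gradient and by the Lipschitz bound on f. Since
  mu^2 = C4^2 |f(x)| (1 + nu), the noise nu in the radius appears either linearly or through
  1/(1 + nu), whose mean is at most b. What is left is a polynomial in (grad f(x) . u)^2 and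
  |u|^2 whose Gaussian moments are computed one coordinate at a time; the choice of C4
  balances the mu^2 and 1/mu^2 contributions.
*)

section \<open>Functions with Lipschitz gradient\<close>

lemma lipschitz_bound_nonneg:
  fixes g :: "'a::euclidean_space \<Rightarrow> 'b::real_normed_vector"
  assumes "\<And>y z. norm (g y - g z) \<le> L * norm (y - z)"
  shows "0 \<le> L"
proof -
  obtain e :: 'a where e: "e \<in> Basis"
    using nonempty_Basis by blast
  have "0 \<le> L * norm (e - 0)"
    using assms[of e 0] norm_ge_zero order_trans by blast
  then show ?thesis
    using e by (simp add: zero_le_mult_iff)
qed

lemma lipschitz_gradient_taylor_bound:
  fixes f :: "'a::euclidean_space \<Rightarrow> real" and df :: "'a \<Rightarrow> 'a"
  assumes grad: "\<And>y. GDERIV f y :> df y"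
    and lip1: "\<And>y z. norm (df y - df z) \<le> L1 * norm (y - z)"
  shows "\<bar>f (x + h) - f x - df x \<bullet> h\<bar> \<le> L1 / 2 * (norm h)\<^sup>2"
proof -
  define E where "E t = f (x + t *\<^sub>R h) - t * (df x \<bullet> h)" for t
  define e where "e t = h \<bullet> df (x + t *\<^sub>R h) - df x \<bullet> h" for t
  have E_deriv: "(E has_real_derivative e t) (at t)" for t
  proof -
    have "((\<lambda>t. x + t *\<^sub>R h) has_derivative (\<lambda>s. s *\<^sub>R h)) (at t)"
      by (auto intro!: derivative_eq_intros)
    from has_derivative_compose[OF this grad[of "x + t *\<^sub>R h", unfolded gderiv_def]]
    have "((\<lambda>t. f (x + t *\<^sub>R h)) has_derivative (\<lambda>s. s * (h \<bullet> df (x + t *\<^sub>R h)))) (at t)"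
      by (simp add: inner_commute)
    moreover have "(\<lambda>s. s * (h \<bullet> df (x + t *\<^sub>R h))) = (*) (h \<bullet> df (x + t *\<^sub>R h))"
      by (simp add: fun_eq_iff)
    ultimately have "((\<lambda>t. f (x + t *\<^sub>R h)) has_real_derivative (h \<bullet> df (x + t *\<^sub>R h))) (at t)"
      by (simp add: has_field_derivative_def)
    then show ?thesis
      unfolding E_def e_def by (auto intro!: derivative_eq_intros)
  qed
  have e_bound: "\<bar>e t\<bar> \<le> L1 * t * (norm h)\<^sup>2" if "0 \<le> t" for t
  proof -
    have "\<bar>e t\<bar> = \<bar>h \<bullet> (df (x + t *\<^sub>R h) - df x)\<bar>"
      by (simp add: e_def inner_diff_right inner_commute[of "df x"])
    also have "\<dots> \<le> norm h * norm (df (x + t *\<^sub>R h) - df x)"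
      by (rule Cauchy_Schwarz_ineq2)
    also have "\<dots> \<le> norm h * (L1 * norm (t *\<^sub>R h))"
      using lip1[of "x + t *\<^sub>R h" x] by (intro mult_left_mono) auto
    finally show ?thesis
      using that by (simp add: power2_eq_square mult_ac)
  qed
  have "E 1 - L1 / 2 * 1\<^sup>2 * (norm h)\<^sup>2 \<le> E 0 - L1 / 2 * 0\<^sup>2 * (norm h)\<^sup>2"
  proof (rule DERIV_nonpos_imp_nonincreasing[where f = "\<lambda>t. E t - L1 / 2 * t\<^sup>2 * (norm h)\<^sup>2"])
    fix t :: real assume "0 \<le> t" "t \<le> 1"
    have "((\<lambda>t. E t - L1 / 2 * t\<^sup>2 * (norm h)\<^sup>2) has_real_derivative e t - L1 * t * (norm h)\<^sup>2) (at t)"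
      by (auto intro!: derivative_eq_intros E_deriv)
    then show "\<exists>y. ((\<lambda>t. E t - L1 / 2 * t\<^sup>2 * (norm h)\<^sup>2) has_real_derivative y) (at t) \<and> y \<le> 0"
      using e_bound[OF \<open>0 \<le> t\<close>] by (auto simp: abs_le_iff)
  qed simp
  moreover have "E 0 + L1 / 2 * 0\<^sup>2 * (norm h)\<^sup>2 \<le> E 1 + L1 / 2 * 1\<^sup>2 * (norm h)\<^sup>2"
  proof (rule DERIV_nonneg_imp_nondecreasing[where f = "\<lambda>t. E t + L1 / 2 * t\<^sup>2 * (norm h)\<^sup>2"])
    fix t :: real assume "0 \<le> t" "t \<le> 1"
    have "((\<lambda>t. E t + L1 / 2 * t\<^sup>2 * (norm h)\<^sup>2) has_real_derivative e t + L1 * t * (norm h)\<^sup>2) (at t)"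
      by (auto intro!: derivative_eq_intros E_deriv)
    then show "\<exists>y. ((\<lambda>t. E t + L1 / 2 * t\<^sup>2 * (norm h)\<^sup>2) has_real_derivative y) (at t) \<and> 0 \<le> y"
      using e_bound[OF \<open>0 \<le> t\<close>] by (auto simp: abs_le_iff)
  qed simp
  ultimately have "f (x + h) - f x - df x \<bullet> h \<le> L1 / 2 * (norm h)\<^sup>2"
    and "- (f (x + h) - f x - df x \<bullet> h) \<le> L1 / 2 * (norm h)\<^sup>2"
    by (simp_all add: E_def)
  then show ?thesis
    by (simp only: abs_le_iff)
qed

lemma power2_add_le: "(p + q)\<^sup>2 \<le> 2 * p\<^sup>2 + 2 * q\<^sup>2" for p q :: real
proof -
  have "0 \<le> (p - q)\<^sup>2"
    by simp
  then show ?thesis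
    by (simp add: power2_eq_square algebra_simps)
qed

section \<open>Moments of the standard Gaussian\<close>

lemma std_normal_poly6_integral:
  "has_bochner_integral lborel
     (\<lambda>y. std_normal_density y * (c6*y^6 + c5*y^5 + c4*y^4 + c3*y^3 + c2*y^2 + c1*y + c0))
     (15*c6 + 3*c4 + c2 + c0)"
proof -
  have even: "has_bochner_integral lborel (\<lambda>y. std_normal_density y * y^(2*k)) (fact (2*k) / (2^k * fact k))"
    for k by (rule std_normal_moment_even)
  have odd: "has_bochner_integral lborel (\<lambda>y. std_normal_density y * y^(2*k+1)) 0" for k
    by (rule std_normal_moment_odd)
  have m6: "has_bochner_integral lborel (\<lambda>y. std_normal_density y * y^6) 15"
    using even[of 3] by (simp add: fact_numeral)
  have m4: "has_bochner_integral lborel (\<lambda>y. std_normal_density y * y^4) 3"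
    using even[of 2] by (simp add: fact_numeral)
  have m2: "has_bochner_integral lborel (\<lambda>y. std_normal_density y * y^2) 1"
    using even[of 1] by simp
  have m0: "has_bochner_integral lborel (\<lambda>y. std_normal_density y) 1"
    using even[of 0] by simp
  have m5: "has_bochner_integral lborel (\<lambda>y. std_normal_density y * y^5) 0"
    using odd[of 2] by (simp add: numeral_eq_Suc)
  have m3: "has_bochner_integral lborel (\<lambda>y. std_normal_density y * y^3) 0"
    using odd[of 1] by (simp add: numeral_eq_Suc)
  have m1: "has_bochner_integral lborel (\<lambda>y. std_normal_density y * y) 0"
    using odd[of 0] by simp
  have "has_bochner_integral lborel
     (\<lambda>y. c6 * (std_normal_density y * y^6) + c5 * (std_normal_density y * y^5)
        + c4 * (std_normal_density y * y^4) + c3 * (std_normal_density y * y^3)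
        + c2 * (std_normal_density y * y^2) + c1 * (std_normal_density y * y) + c0 * std_normal_density y)
     (c6 * 15 + c5 * 0 + c4 * 3 + c3 * 0 + c2 * 1 + c1 * 0 + c0 * 1)"
    by (intro has_bochner_integral_add has_bochner_integral_mult_right m0 m1 m2 m3 m4 m5 m6)
  then show ?thesis
    by (simp add: algebra_simps)
qed

lemma nn_integral_std_normal_poly6:
  fixes c6 c5 c4 c3 c2 c1 c0 :: real
  assumes "\<And>y. 0 \<le> c6*y^6 + c5*y^5 + c4*y^4 + c3*y^3 + c2*y^2 + c1*y + c0"
  shows "(\<integral>\<^sup>+y. ennreal (std_normal_density y * (c6*y^6 + c5*y^5 + c4*y^4 + c3*y^3 + c2*y^2 + c1*y + c0))
            \<partial>lborel) = ennreal (15*c6 + 3*c4 + c2 + c0)"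
  using std_normal_poly6_integral[of c6 c5 c4 c3 c2 c1 c0] assms
  by (subst nn_integral_eq_integral)
     (auto simp: has_bochner_integral_iff normal_density_nonneg)

lemma nn_integral_std_normal_moment_step:
  fixes s t \<omega> :: real
  assumes "0 \<le> s" "0 \<le> a" "0 \<le> b" "0 \<le> c" "0 \<le> d" "0 \<le> e" "0 \<le> k"
  shows "(\<integral>\<^sup>+y. ennreal (std_normal_density y *
             (a * (\<omega>*y + t)\<^sup>2 * (y\<^sup>2 + s) + b * (\<omega>*y + t)\<^sup>2
              + c * (y\<^sup>2 + s)^3 + d * (y\<^sup>2 + s)\<^sup>2 + e * (y\<^sup>2 + s) + k)) \<partial>lborel)
       = ennreal (a * t\<^sup>2 * s + (a + b) * t\<^sup>2 + c * s^3 + (3*c + d) * s\<^sup>2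
                  + (a*\<omega>\<^sup>2 + 9*c + 2*d + e) * s
                  + (15*c + 3*a*\<omega>\<^sup>2 + 3*d + b*\<omega>\<^sup>2 + e + k))"
proof -
  let ?p = "\<lambda>y. a * (\<omega>*y + t)\<^sup>2 * (y\<^sup>2 + s) + b * (\<omega>*y + t)\<^sup>2
              + c * (y\<^sup>2 + s)^3 + d * (y\<^sup>2 + s)\<^sup>2 + e * (y\<^sup>2 + s) + k"
  have expand: "?p y
      = c * y^6 + 0 * y^5 + (a * \<omega>\<^sup>2 + 3 * c * s + d) * y^4 + (2 * a * \<omega> * t) * y^3
        + (a * (t\<^sup>2 + \<omega>\<^sup>2 * s) + b * \<omega>\<^sup>2 + 3 * c * s\<^sup>2 + 2 * d * s + e) * y^2
        + (2 * a * \<omega> * t * s + 2 * b * \<omega> * t) * y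
        + (a * t\<^sup>2 * s + b * t\<^sup>2 + c * s^3 + d * s\<^sup>2 + e * s + k)" for y
    by (simp add: eval_nat_numeral algebra_simps)
  have "0 \<le> ?p y" for y
    using assms by (intro add_nonneg_nonneg mult_nonneg_nonneg) auto
  then show ?thesis
    unfolding expand by (subst nn_integral_std_normal_poly6) (simp_all add: algebra_simps)
qed

definition std_normal_PiM :: "'i set \<Rightarrow> ('i \<Rightarrow> real) measure" where
  "std_normal_PiM I =
     density (\<Pi>\<^sub>M i\<in>I. lborel) (\<lambda>z. \<Prod>i\<in>I. ennreal (std_normal_density (z i)))"

lemma sum_fun_upd_insert:
  assumes "finite I" "i \<notin> I"
  shows "(\<Sum>j\<in>insert i I. g j ((z(i := y)) j)) = g i y + (\<Sum>j\<in>I. g j (z j))"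
proof -
  have "(\<Sum>j\<in>I. g j ((z(i := y)) j)) = (\<Sum>j\<in>I. g j (z j))"
    using assms(2) by (intro sum.cong) auto
  then show ?thesis
    using assms by simp
qed

lemma nn_integral_std_normal_PiM_insert:
  fixes h :: "('i \<Rightarrow> real) \<Rightarrow> real"
  assumes I: "finite I" "i \<notin> I"
    and [measurable]: "h \<in> borel_measurable (\<Pi>\<^sub>M j\<in>insert i I. lborel)"
    and [measurable]: "k \<in> borel_measurable (\<Pi>\<^sub>M j\<in>I. lborel)"
    and k: "\<And>z. (\<integral>\<^sup>+y. ennreal (std_normal_density y * h (z(i := y))) \<partial>lborel) = ennreal (k z)"
  shows "(\<integral>\<^sup>+z. ennreal (h z) \<partial>std_normal_PiM (insert i I))
       = (\<integral>\<^sup>+z. ennreal (k z) \<partial>std_normal_PiM I)"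
proof -
  interpret product_sigma_finite "\<lambda>_::'i. lborel :: real measure"
    by (simp add: product_sigma_finite_def lborel.sigma_finite_measure_axioms)
  let ?\<phi> = "\<lambda>I z. \<Prod>j\<in>I. ennreal (std_normal_density (z j))"
  have split: "?\<phi> (insert i I) (z(i := y)) = ennreal (std_normal_density y) * ?\<phi> I z" for z y
  proof -
    have "?\<phi> I (z(i := y)) = ?\<phi> I z"
      using I(2) by (intro prod.cong) auto
    then show ?thesis
      using I by simp
  qed
  have "(\<integral>\<^sup>+z. ennreal (h z) \<partial>std_normal_PiM (insert i I))
      = (\<integral>\<^sup>+z. \<integral>\<^sup>+y. ?\<phi> (insert i I) (z(i := y)) * ennreal (h (z(i := y))) \<partial>lborel \<partial>(\<Pi>\<^sub>M j\<in>I. lborel))"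
    unfolding std_normal_PiM_def
    by (subst nn_integral_density) (measurable, rule product_nn_integral_insert[OF I], measurable)
  also have "\<dots> = (\<integral>\<^sup>+z. ?\<phi> I z * ennreal (k z) \<partial>(\<Pi>\<^sub>M j\<in>I. lborel))"
  proof (rule nn_integral_cong)
    fix z :: "'i \<Rightarrow> real" assume z: "z \<in> space (\<Pi>\<^sub>M j\<in>I. lborel)"
    have [measurable]: "(\<lambda>y. h (z(i := y))) \<in> borel_measurable lborel"
      using measurable_comp[OF measurable_component_update[OF z I(2)] assms(3)] by (simp add: comp_def)
    have "(\<integral>\<^sup>+y. ?\<phi> (insert i I) (z(i := y)) * ennreal (h (z(i := y))) \<partial>lborel)
        = (\<integral>\<^sup>+y. ?\<phi> I z * ennreal (std_normal_density y * h (z(i := y))) \<partial>lborel)"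
      unfolding split by (simp add: ennreal_mult' normal_density_nonneg mult_ac)
    also have "\<dots> = ?\<phi> I z * ennreal (k z)"
      by (simp add: nn_integral_cmult k)
    finally show "(\<integral>\<^sup>+y. ?\<phi> (insert i I) (z(i := y)) * ennreal (h (z(i := y))) \<partial>lborel)
        = ?\<phi> I z * ennreal (k z)" .
  qed
  also have "\<dots> = (\<integral>\<^sup>+z. ennreal (k z) \<partial>std_normal_PiM I)"
    unfolding std_normal_PiM_def by (subst nn_integral_density) auto
  finally show ?thesis .
qed

lemma nn_integral_std_normal_PiM_moments:
  fixes w :: "'i \<Rightarrow> real"
  assumes "finite I" "0 \<le> a" "0 \<le> b" "0 \<le> c" "0 \<le> d" "0 \<le> e" "0 \<le> k"
  shows "(\<integral>\<^sup>+z. ennreal (a * (\<Sum>j\<in>I. w j * z j)\<^sup>2 * (\<Sum>j\<in>I. (z j)\<^sup>2) + b * (\<Sum>j\<in>I. w j * z j)\<^sup>2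
             + c * (\<Sum>j\<in>I. (z j)\<^sup>2)^3 + d * (\<Sum>j\<in>I. (z j)\<^sup>2)\<^sup>2 + e * (\<Sum>j\<in>I. (z j)\<^sup>2) + k)
           \<partial>std_normal_PiM I)
       = ennreal (a * (real (card I) + 2) * (\<Sum>j\<in>I. (w j)\<^sup>2) + b * (\<Sum>j\<in>I. (w j)\<^sup>2)
                  + c * (real (card I) * (real (card I) + 2) * (real (card I) + 4))
                  + d * (real (card I) * (real (card I) + 2)) + e * real (card I) + k)"
  using assms
(* integrating out one coordinate maps this family of polynomials in the two sums to itself,
   so the induction must generalise over the lower coefficients *)
proof (induction I arbitrary: b d e k rule: finite_induct)
  case empty
  then show ?case
    by (simp add: std_normal_PiM_def PiM_empty emeasure_density)
next
  case (insert i I)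
  let ?S = "\<lambda>z. \<Sum>j\<in>I. (z j)\<^sup>2" and ?Y = "\<lambda>z. \<Sum>j\<in>I. w j * z j" and ?n = "real (card I)"
  have S_upd: "(\<Sum>j\<in>insert i I. ((z(i := y)) j)\<^sup>2) = y\<^sup>2 + ?S z"
    and Y_upd: "(\<Sum>j\<in>insert i I. w j * (z(i := y)) j) = w i * y + ?Y z" for z :: "'i \<Rightarrow> real" and y
    using sum_fun_upd_insert[OF insert(1,2), of "\<lambda>_ t. t\<^sup>2"]
      sum_fun_upd_insert[OF insert(1,2), of "\<lambda>j t. w j * t"] by simp_all
  have S_nonneg: "0 \<le> ?S z" for z :: "'i \<Rightarrow> real"
    by (simp add: sum_nonneg)
  have "(\<integral>\<^sup>+z. ennreal (a * (\<Sum>j\<in>insert i I. w j * z j)\<^sup>2 * (\<Sum>j\<in>insert i I. (z j)\<^sup>2)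
             + b * (\<Sum>j\<in>insert i I. w j * z j)\<^sup>2 + c * (\<Sum>j\<in>insert i I. (z j)\<^sup>2)^3
             + d * (\<Sum>j\<in>insert i I. (z j)\<^sup>2)\<^sup>2 + e * (\<Sum>j\<in>insert i I. (z j)\<^sup>2) + k)
           \<partial>std_normal_PiM (insert i I))
      = (\<integral>\<^sup>+z. ennreal (a * (?Y z)\<^sup>2 * ?S z + (a + b) * (?Y z)\<^sup>2 + c * (?S z)^3
             + (3*c + d) * (?S z)\<^sup>2 + (a * (w i)\<^sup>2 + 9*c + 2*d + e) * ?S z
             + (15*c + 3*a*(w i)\<^sup>2 + 3*d + b*(w i)\<^sup>2 + e + k))
           \<partial>std_normal_PiM I)"
    using insert.prems S_nonneg
    by (intro nn_integral_std_normal_PiM_insert[OF insert(1,2)], measurable, measurable)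
       (unfold S_upd Y_upd, rule nn_integral_std_normal_moment_step)
  also have "\<dots> = ennreal (a * (?n + 2) * (\<Sum>j\<in>I. (w j)\<^sup>2) + (a + b) * (\<Sum>j\<in>I. (w j)\<^sup>2)
                  + c * (?n * (?n + 2) * (?n + 4)) + (3*c + d) * (?n * (?n + 2))
                  + (a * (w i)\<^sup>2 + 9*c + 2*d + e) * ?n
                  + (15*c + 3*a*(w i)\<^sup>2 + 3*d + b*(w i)\<^sup>2 + e + k))"
    using insert.prems
    by (intro insert.IH[where b = "a + b" and d = "3*c + d"
          and e = "a * (w i)\<^sup>2 + 9*c + 2*d + e"
          and k = "15*c + 3*a*(w i)\<^sup>2 + 3*d + b*(w i)\<^sup>2 + e + k"]) auto
  finally show ?case
    using insert(1,2) by (simp add: algebra_simps)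
qed

lemma inner_sum_Basis_scaleR:
  fixes w :: "'a::euclidean_space"
  shows "w \<bullet> (\<Sum>b\<in>Basis. z b *\<^sub>R b) = (\<Sum>b\<in>Basis. (w \<bullet> b) * z b)"
  by (simp add: inner_sum_right mult.commute)

lemma norm_sum_Basis_scaleR_sq:
  "(norm (\<Sum>b\<in>Basis. z b *\<^sub>R (b::'a::euclidean_space)))\<^sup>2 = (\<Sum>b\<in>Basis. (z b)\<^sup>2)"
proof -
  let ?v = "\<Sum>b\<in>Basis. z b *\<^sub>R (b::'a)"
  have coord: "?v \<bullet> b = z b" if "b \<in> Basis" for b
    using that by (simp add: inner_sum_left inner_Basis if_distrib cong: if_cong)
  have "(norm ?v)\<^sup>2 = ?v \<bullet> ?v"
    by (rule power2_norm_eq_inner)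
  also have "\<dots> = (\<Sum>b\<in>Basis. z b * z b)"
    by (simp add: inner_sum_Basis_scaleR coord)
  finally show ?thesis
    by (simp add: power2_eq_square)
qed

lemma std_gaussian_density_sum_Basis:
  "(2 * pi) powr (- real DIM('a) / 2) * exp (- (norm (\<Sum>b\<in>Basis. z b *\<^sub>R (b::'a::euclidean_space)))\<^sup>2 / 2)
     = (\<Prod>b\<in>Basis. std_normal_density (z b))"
proof -
  have "(2 * pi) powr (- real DIM('a) / 2) = (\<Prod>b\<in>(Basis::'a set). 1 / sqrt (2 * pi))"
  proof -
    have "(2 * pi) powr (real DIM('a) / 2) = ((2 * pi) powr (1 / 2)) powr real DIM('a)"
      by (simp add: powr_powr)
    then show ?thesis
      by (simp add: powr_minus_divide powr_half_sqrt powr_realpow power_one_over)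
  qed
  moreover have "exp (- (norm (\<Sum>b\<in>Basis. z b *\<^sub>R (b::'a)))\<^sup>2 / 2) = (\<Prod>b\<in>Basis. exp (- (z b)\<^sup>2 / 2))"
    by (simp add: norm_sum_Basis_scaleR_sq exp_sum[symmetric] sum_negf sum_divide_distrib)
  ultimately show ?thesis
    by (simp add: std_normal_density_def prod_dividef power_one_over)
qed

lemma nn_integral_std_gaussian:
  fixes h :: "'a::euclidean_space \<Rightarrow> ennreal"
  assumes [measurable]: "h \<in> borel_measurable borel"
  shows "(\<integral>\<^sup>+u. h u \<partial>std_gaussian) = (\<integral>\<^sup>+z. h (\<Sum>b\<in>Basis. z b *\<^sub>R b) \<partial>std_normal_PiM Basis)"
proof -
  have "(\<integral>\<^sup>+u. h u \<partial>std_gaussian)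
      = (\<integral>\<^sup>+u. ennreal ((2 * pi) powr (- real DIM('a) / 2) * exp (- (norm u)\<^sup>2 / 2)) * h u
           \<partial>distr (\<Pi>\<^sub>M b\<in>Basis. lborel) borel (\<lambda>z. \<Sum>b\<in>Basis. z b *\<^sub>R b))"
    unfolding std_gaussian_def lborel_eq[symmetric] by (rule nn_integral_density) measurable
  also have "\<dots> = (\<integral>\<^sup>+z. ennreal ((2 * pi) powr (- real DIM('a) / 2)
             * exp (- (norm (\<Sum>b\<in>Basis. z b *\<^sub>R (b::'a)))\<^sup>2 / 2)) * h (\<Sum>b\<in>Basis. z b *\<^sub>R b)
           \<partial>(\<Pi>\<^sub>M b\<in>Basis. lborel))"
    by (rule nn_integral_distr) measurable
  also have "\<dots> = (\<integral>\<^sup>+z. (\<Prod>b\<in>Basis. ennreal (std_normal_density (z b))) * h (\<Sum>b\<in>Basis. z b *\<^sub>R b)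
           \<partial>(\<Pi>\<^sub>M b\<in>Basis. lborel))"
    unfolding std_gaussian_density_sum_Basis by (simp add: prod_ennreal normal_density_nonneg)
  also have "\<dots> = (\<integral>\<^sup>+z. h (\<Sum>b\<in>Basis. z b *\<^sub>R b) \<partial>std_normal_PiM Basis)"
    unfolding std_normal_PiM_def by (subst nn_integral_density) simp_all
  finally show ?thesis .
qed

lemma nn_integral_std_gaussian_moments:
  fixes g :: "'a::euclidean_space"
  assumes "0 \<le> a" "0 \<le> b" "0 \<le> c" "0 \<le> d" "0 \<le> e" "0 \<le> k"
  defines "n \<equiv> real DIM('a)"
  shows "(\<integral>\<^sup>+u. ennreal (a * (g \<bullet> u)\<^sup>2 * (norm u)\<^sup>2 + b * (g \<bullet> u)\<^sup>2
             + c * (norm u)^6 + d * (norm u)^4 + e * (norm u)\<^sup>2 + k) \<partial>std_gaussian)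
       = ennreal (a * (n + 2) * (norm g)\<^sup>2 + b * (norm g)\<^sup>2
                  + c * (n * (n + 2) * (n + 4)) + d * (n * (n + 2)) + e * n + k)"
proof -
  have norm_g: "(norm g)\<^sup>2 = (\<Sum>j\<in>Basis. (g \<bullet> j)\<^sup>2)"
    using norm_sum_Basis_scaleR_sq[of "\<lambda>b. g \<bullet> b"] by (simp add: euclidean_representation)
  have pow: "(norm u)^6 = ((norm u)\<^sup>2)^3" "(norm u)^4 = ((norm u)\<^sup>2)\<^sup>2" for u :: 'a
    by (simp_all flip: power_mult)
  show ?thesis
    unfolding pow
    by (subst nn_integral_std_gaussian, measurable)
       (simp add: inner_sum_Basis_scaleR norm_sum_Basis_scaleR_sq norm_g n_def
                  nn_integral_std_normal_PiM_moments assms)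
qed

section \<open>Bounded multiplicative noise\<close>

locale zero_mean_bounded_noise = prob_space D for D :: "real measure" +
  fixes a :: real
  assumes sets_D: "sets D = sets borel"
    and bound_less_one: "a < 1"
    and AE_bounded: "AE v in D. v \<in> {-a..a}"
    and expectation_zero: "expectation (\<lambda>v. v) = 0"
begin

lemma measurable_D_eq [simp]: "measurable D M = measurable borel M"
  by (rule measurable_cong_sets[OF sets_D refl])

lemma AE_shift_pos: "AE v in D. 0 < 1 + v"
  using AE_bounded by eventually_elim (use bound_less_one in auto)

lemma integrable_id: "integrable D (\<lambda>v. v)"
proof (rule integrable_const_bound[where B = "\<bar>a\<bar>"])
  show "AE v in D. norm v \<le> \<bar>a\<bar>"
    using AE_bounded by eventually_elim auto
qed simp

lemma integrable_square: "integrable D (\<lambda>v. v\<^sup>2)"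
proof (rule integrable_const_bound[where B = "a\<^sup>2"])
  show "AE v in D. norm (v\<^sup>2) \<le> a\<^sup>2"
    using AE_bounded by eventually_elim (auto simp flip: abs_le_square_iff)
qed simp

lemma integrable_inverse_shift: "integrable D (\<lambda>v. 1 / (1 + v))"
proof (rule integrable_const_bound[where B = "1 / (1 - a)"])
  show "AE v in D. norm (1 / (1 + v)) \<le> 1 / (1 - a)"
    using AE_bounded by eventually_elim (use bound_less_one in \<open>auto simp: divide_simps\<close>)
qed simp

lemma expectation_inverse_shift_nonneg: "0 \<le> expectation (\<lambda>v. 1 / (1 + v))"
  using AE_shift_pos by (intro integral_nonneg_AE) (auto elim!: eventually_mono)

lemma nn_integral_affine_sq:
  assumes "variance (\<lambda>v. v) = \<sigma>\<^sup>2" and "0 \<le> r"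
  shows "(\<integral>\<^sup>+v. ennreal ((p + q * v)\<^sup>2 + r) \<partial>D) = ennreal (p\<^sup>2 + q\<^sup>2 * \<sigma>\<^sup>2 + r)"
proof -
  have expand: "(\<lambda>v. (p + q * v)\<^sup>2 + r) = (\<lambda>v. (p\<^sup>2 + r) + (2 * p * q) * v + q\<^sup>2 * v\<^sup>2)"
    by (auto simp: power2_eq_square algebra_simps)
  have second_moment: "expectation (\<lambda>v. v\<^sup>2) = \<sigma>\<^sup>2"
    using assms(1) by (simp add: expectation_zero)
  have "(\<integral>\<^sup>+v. ennreal ((p + q * v)\<^sup>2 + r) \<partial>D) = ennreal (expectation (\<lambda>v. (p + q * v)\<^sup>2 + r))"
    using integrable_id integrable_square assms(2)
    by (intro nn_integral_eq_integral) (auto simp: expand)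
  also have "expectation (\<lambda>v. (p + q * v)\<^sup>2 + r) = p\<^sup>2 + q\<^sup>2 * \<sigma>\<^sup>2 + r"
    unfolding expand using integrable_id integrable_square
    by (simp add: expectation_zero second_moment prob_space)
  finally show ?thesis .
qed

lemma nn_integral_le_of_inverse_shift_bound:
  assumes b: "expectation (\<lambda>v. 1 / (1 + v)) \<le> b"
    and nonneg: "0 \<le> A" "0 \<le> B" "0 \<le> C"
    and Q: "\<And>v. v \<in> {-a..a} \<Longrightarrow> Q v \<le> A + (1 + v) * B + C * (1 / (1 + v))"
  shows "(\<integral>\<^sup>+v. ennreal (Q v) \<partial>D) \<le> ennreal (A + B + b * C)"
proof -
  let ?h = "\<lambda>v. A + (1 + v) * B + C * (1 / (1 + v))"
  have int_h: "integrable D ?h"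
    by (intro Bochner_Integration.integrable_add integrable_mult_left integrable_mult_right
          integrable_const integrable_id integrable_inverse_shift)
  have "AE v in D. ennreal (Q v) \<le> ennreal (?h v)"
    using AE_bounded by eventually_elim (intro ennreal_leI Q)
  then have "(\<integral>\<^sup>+v. ennreal (Q v) \<partial>D) \<le> (\<integral>\<^sup>+v. ennreal (?h v) \<partial>D)"
    by (rule nn_integral_mono_AE)
  also have "\<dots> = ennreal (expectation ?h)"
    using AE_shift_pos nonneg
    by (intro nn_integral_eq_integral int_h) (auto elim!: eventually_mono)
  also have "expectation ?h = A + B + C * expectation (\<lambda>v. 1 / (1 + v))"
  proof -
    have "?h = (\<lambda>v. ((A + B) + B * v) + C * (1 / (1 + v)))"
      by (simp add: fun_eq_iff algebra_simps)
    moreover have "integrable D (\<lambda>v. (A + B) + B * v)"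
      using integrable_id by simp
    moreover have "integrable D (\<lambda>v. C * (1 / (1 + v)))"
      by (intro integrable_mult_right integrable_inverse_shift)
    ultimately have "expectation ?h
        = expectation (\<lambda>v. (A + B) + B * v) + expectation (\<lambda>v. C * (1 / (1 + v)))"
      by (simp only: Bochner_Integration.integral_add)
    also have "expectation (\<lambda>v. (A + B) + B * v) = A + B"
      using integrable_id by (simp add: expectation_zero prob_space)
    finally show ?thesis
      by (simp only: integral_mult_right_zero)
  qed
  also have "\<dots> \<le> A + B + b * C"
    using b nonneg by (simp add: mult.commute mult_left_mono)
  finally show ?thesis
    by (simp add: ennreal_leI)
qed

end

section \<open>Second moment of the estimator\<close>

lemma nn_integral_pair_measure4:
  assumes M2: "sigma_finite_measure M2" and M3: "sigma_finite_measure M3"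
    and M4: "sigma_finite_measure M4"
    and f: "f \<in> borel_measurable (M1 \<Otimes>\<^sub>M (M2 \<Otimes>\<^sub>M (M3 \<Otimes>\<^sub>M M4)))"
  shows "integral\<^sup>N (M1 \<Otimes>\<^sub>M (M2 \<Otimes>\<^sub>M (M3 \<Otimes>\<^sub>M M4))) f
       = (\<integral>\<^sup>+x1. \<integral>\<^sup>+x2. \<integral>\<^sup>+x3. \<integral>\<^sup>+x4. f (x1, x2, x3, x4) \<partial>M4 \<partial>M3 \<partial>M2 \<partial>M1)"
proof -
  interpret M4: sigma_finite_measure M4 by (rule M4)
  interpret M34: sigma_finite_measure "M3 \<Otimes>\<^sub>M M4"
    by (rule sigma_finite_pair_measure[OF M3 M4])
  interpret M234: sigma_finite_measure "M2 \<Otimes>\<^sub>M (M3 \<Otimes>\<^sub>M M4)"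
    by (rule sigma_finite_pair_measure[OF M2 M34.sigma_finite_measure_axioms])
  have "integral\<^sup>N (M1 \<Otimes>\<^sub>M (M2 \<Otimes>\<^sub>M (M3 \<Otimes>\<^sub>M M4))) f
      = (\<integral>\<^sup>+x1. \<integral>\<^sup>+y. f (x1, y) \<partial>(M2 \<Otimes>\<^sub>M (M3 \<Otimes>\<^sub>M M4)) \<partial>M1)"
    by (rule M234.nn_integral_fst[OF f, symmetric])
  also have "\<dots> = (\<integral>\<^sup>+x1. \<integral>\<^sup>+x2. \<integral>\<^sup>+x3. \<integral>\<^sup>+x4. f (x1, x2, x3, x4) \<partial>M4 \<partial>M3 \<partial>M2 \<partial>M1)"
  proof (intro nn_integral_cong)
    fix x1 assume x1: "x1 \<in> space M1"
    note f1 = measurable_Pair2[OF f x1]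
    have "(\<integral>\<^sup>+y. f (x1, y) \<partial>(M2 \<Otimes>\<^sub>M (M3 \<Otimes>\<^sub>M M4)))
        = (\<integral>\<^sup>+x2. \<integral>\<^sup>+z. f (x1, x2, z) \<partial>(M3 \<Otimes>\<^sub>M M4) \<partial>M2)"
      using M34.nn_integral_fst[OF f1] by simp
    also have "\<dots> = (\<integral>\<^sup>+x2. \<integral>\<^sup>+x3. \<integral>\<^sup>+x4. f (x1, x2, x3, x4) \<partial>M4 \<partial>M3 \<partial>M2)"
    proof (intro nn_integral_cong)
      fix x2 assume "x2 \<in> space M2"
      from M4.nn_integral_fst[OF measurable_Pair2[OF f1 this]]
      show "(\<integral>\<^sup>+z. f (x1, x2, z) \<partial>(M3 \<Otimes>\<^sub>M M4)) = (\<integral>\<^sup>+x3. \<integral>\<^sup>+x4. f (x1, x2, x3, x4) \<partial>M4 \<partial>M3)"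
        by simp
    qed
    finally show "(\<integral>\<^sup>+y. f (x1, y) \<partial>(M2 \<Otimes>\<^sub>M (M3 \<Otimes>\<^sub>M M4)))
        = (\<integral>\<^sup>+x2. \<integral>\<^sup>+x3. \<integral>\<^sup>+x4. f (x1, x2, x3, x4) \<partial>M4 \<partial>M3 \<partial>M2)" .
  qed
  finally show ?thesis .
qed

lemma zo_noise_average_le:
  fixes f :: "'a::euclidean_space \<Rightarrow> real" and df :: "'a \<Rightarrow> 'a" and x u :: 'a
  assumes grad: "\<And>y. GDERIV f y :> df y"
    and lip0: "\<And>y z. \<bar>f y - f z\<bar> \<le> L0 * norm (y - z)"
    and lip1: "\<And>y z. norm (df y - df z) \<le> L1 * norm (y - z)"
    and \<mu>: "0 < \<mu>"
  defines "F \<equiv> f (x + \<mu> *\<^sub>R u)"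
  shows "(norm u)\<^sup>2 / \<mu>\<^sup>2 * ((F - f x)\<^sup>2 + F\<^sup>2 * \<sigma>\<^sup>2 + (f x)\<^sup>2 * \<sigma>\<^sup>2)
       \<le> 2 * (df x \<bullet> u)\<^sup>2 * (norm u)\<^sup>2 + L1\<^sup>2 / 2 * \<mu>\<^sup>2 * (norm u)^6
         + 2 * \<sigma>\<^sup>2 * L0\<^sup>2 * (norm u)^4 + 3 * \<sigma>\<^sup>2 * (f x)\<^sup>2 / \<mu>\<^sup>2 * (norm u)\<^sup>2"
proof -
  let ?r = "F - f x - \<mu> * (df x \<bullet> u)"
  have "\<bar>?r\<bar> \<le> L1 / 2 * (\<mu>\<^sup>2 * (norm u)\<^sup>2)"
    using lipschitz_gradient_taylor_bound[OF grad lip1, of x "\<mu> *\<^sub>R u"] \<mu> by (simp add: F_def power_mult_distrib)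
  then have "?r\<^sup>2 \<le> (L1 / 2 * (\<mu>\<^sup>2 * (norm u)\<^sup>2))\<^sup>2"
    by (metis abs_ge_zero power2_abs power_mono)
  moreover have "(F - f x)\<^sup>2 \<le> 2 * (\<mu> * (df x \<bullet> u))\<^sup>2 + 2 * ?r\<^sup>2"
    using power2_add_le[of "\<mu> * (df x \<bullet> u)" ?r] by simp
  moreover have "2 * (L1 / 2 * (\<mu>\<^sup>2 * (norm u)\<^sup>2))\<^sup>2 = L1\<^sup>2 / 2 * \<mu>^4 * (norm u)^4"
    by (simp add: power_mult_distrib power_divide flip: power_mult)
  ultimately have taylor: "(F - f x)\<^sup>2 \<le> 2 * \<mu>\<^sup>2 * (df x \<bullet> u)\<^sup>2 + L1\<^sup>2 / 2 * \<mu>^4 * (norm u)^4"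
    by (simp add: power_mult_distrib)
  have "\<bar>F - f x\<bar> \<le> L0 * (\<mu> * norm u)"
    using lip0[of "x + \<mu> *\<^sub>R u" x] \<mu> by (simp add: F_def)
  then have "(F - f x)\<^sup>2 \<le> (L0 * (\<mu> * norm u))\<^sup>2"
    by (metis abs_ge_zero power2_abs power_mono)
  then have lipschitz: "(F - f x)\<^sup>2 \<le> L0\<^sup>2 * \<mu>\<^sup>2 * (norm u)\<^sup>2"
    by (simp add: power_mult_distrib)
  have F_sq: "F\<^sup>2 \<le> 2 * (f x)\<^sup>2 + 2 * (F - f x)\<^sup>2"
    using power2_add_le[of "f x" "F - f x"] by simp
  have "(F - f x)\<^sup>2 + F\<^sup>2 * \<sigma>\<^sup>2 + (f x)\<^sup>2 * \<sigma>\<^sup>2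
      \<le> (2 * \<mu>\<^sup>2 * (df x \<bullet> u)\<^sup>2 + L1\<^sup>2 / 2 * \<mu>^4 * (norm u)^4)
        + 2 * (L0\<^sup>2 * \<mu>\<^sup>2 * (norm u)\<^sup>2) * \<sigma>\<^sup>2 + 3 * (f x)\<^sup>2 * \<sigma>\<^sup>2"
    using taylor mult_right_mono[OF F_sq, of "\<sigma>\<^sup>2"] mult_right_mono[OF lipschitz, of "\<sigma>\<^sup>2"]
    by (simp add: algebra_simps)
  then have "(norm u)\<^sup>2 / \<mu>\<^sup>2 * ((F - f x)\<^sup>2 + F\<^sup>2 * \<sigma>\<^sup>2 + (f x)\<^sup>2 * \<sigma>\<^sup>2)
      \<le> (norm u)\<^sup>2 / \<mu>\<^sup>2 * ((2 * \<mu>\<^sup>2 * (df x \<bullet> u)\<^sup>2 + L1\<^sup>2 / 2 * \<mu>^4 * (norm u)^4)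
        + 2 * (L0\<^sup>2 * \<mu>\<^sup>2 * (norm u)\<^sup>2) * \<sigma>\<^sup>2 + 3 * (f x)\<^sup>2 * \<sigma>\<^sup>2)"
    by (rule mult_left_mono) simp
  also have "\<dots> = 2 * (df x \<bullet> u)\<^sup>2 * (norm u)\<^sup>2 + L1\<^sup>2 / 2 * \<mu>\<^sup>2 * (norm u)^6
         + 2 * \<sigma>\<^sup>2 * L0\<^sup>2 * (norm u)^4 + 3 * \<sigma>\<^sup>2 * (f x)\<^sup>2 / \<mu>\<^sup>2 * (norm u)\<^sup>2"
    using \<mu> by (simp add: field_simps eval_nat_numeral)
  finally show ?thesis .
qed

lemma zo_noise_average_le_radius:
  fixes f :: "'a::euclidean_space \<Rightarrow> real" and df :: "'a \<Rightarrow> 'a" and x u :: 'a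
  assumes grad: "\<And>y. GDERIV f y :> df y"
    and lip0: "\<And>y z. \<bar>f y - f z\<bar> \<le> L0 * norm (y - z)"
    and lip1: "\<And>y z. norm (df y - df z) \<le> L1 * norm (y - z)"
    and c: "0 < c" and fx: "f x \<noteq> 0" and v: "0 < 1 + v"
  defines "\<mu> \<equiv> c * sqrt \<bar>noisy f x v\<bar>"
  defines "F \<equiv> f (x + \<mu> *\<^sub>R u)"
  shows "(norm u)\<^sup>2 / \<mu>\<^sup>2 * ((F - f x)\<^sup>2 + F\<^sup>2 * \<sigma>\<^sup>2 + (f x)\<^sup>2 * \<sigma>\<^sup>2)
       \<le> (2 * (df x \<bullet> u)\<^sup>2 * (norm u)\<^sup>2 + 2 * \<sigma>\<^sup>2 * L0\<^sup>2 * (norm u)^4)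
         + (1 + v) * (L1\<^sup>2 / 2 * c\<^sup>2 * \<bar>f x\<bar> * (norm u)^6)
         + 3 * \<sigma>\<^sup>2 * \<bar>f x\<bar> / c\<^sup>2 * (norm u)\<^sup>2 * (1 / (1 + v))"
proof -
  define \<phi> where "\<phi> = \<bar>f x\<bar>"
  define w where "w = 1 + v"
  have \<phi>: "0 < \<phi>" and w: "0 < w"
    using fx v by (simp_all add: \<phi>_def w_def)
  have \<mu>_sq: "\<mu>\<^sup>2 = c\<^sup>2 * \<phi> * w"
    using v by (simp add: \<mu>_def noisy_def power_mult_distrib abs_mult \<phi>_def w_def)
  have "0 < \<mu>"
    using c fx v by (simp add: \<mu>_def noisy_def)
  then have "(norm u)\<^sup>2 / \<mu>\<^sup>2 * ((F - f x)\<^sup>2 + F\<^sup>2 * \<sigma>\<^sup>2 + (f x)\<^sup>2 * \<sigma>\<^sup>2)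
      \<le> 2 * (df x \<bullet> u)\<^sup>2 * (norm u)\<^sup>2 + L1\<^sup>2 / 2 * \<mu>\<^sup>2 * (norm u)^6
         + 2 * \<sigma>\<^sup>2 * L0\<^sup>2 * (norm u)^4 + 3 * \<sigma>\<^sup>2 * (f x)\<^sup>2 / \<mu>\<^sup>2 * (norm u)\<^sup>2"
    unfolding F_def by (rule zo_noise_average_le[OF grad lip0 lip1])
  also have "\<dots> = (2 * (df x \<bullet> u)\<^sup>2 * (norm u)\<^sup>2 + 2 * \<sigma>\<^sup>2 * L0\<^sup>2 * (norm u)^4)
         + w * (L1\<^sup>2 / 2 * c\<^sup>2 * \<phi> * (norm u)^6) + 3 * \<sigma>\<^sup>2 * \<phi> / c\<^sup>2 * (norm u)\<^sup>2 * (1 / w)"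
    unfolding \<mu>_sq power2_abs[of "f x", symmetric] \<phi>_def[symmetric]
    using c \<phi> w by (simp add: field_simps power2_eq_square)
  finally show ?thesis
    by (simp add: \<phi>_def w_def)
qed

context zero_mean_bounded_noise
begin

lemma nn_integral_zo_est_sq_noise:
  fixes f :: "'a::euclidean_space \<Rightarrow> real" and x u :: 'a and n L1 s v1 :: real
  assumes var: "variance (\<lambda>v. v) = \<sigma>\<^sup>2"
  defines "\<mu> \<equiv> C4 n L1 s * sqrt \<bar>noisy f x v1\<bar>"
  defines "F \<equiv> f (x + \<mu> *\<^sub>R u)"
  shows "(\<integral>\<^sup>+v2. \<integral>\<^sup>+v3. ennreal ((norm (zo_est n L1 s f x u v1 v2 v3))\<^sup>2) \<partial>D \<partial>D)
       = ennreal ((norm u)\<^sup>2 / \<mu>\<^sup>2 * ((F - f x)\<^sup>2 + F\<^sup>2 * \<sigma>\<^sup>2 + (f x)\<^sup>2 * \<sigma>\<^sup>2))"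
proof -
  let ?K = "(norm u)\<^sup>2 / \<mu>\<^sup>2"
  have K: "0 \<le> ?K"
    by simp
  (* the summand 0 puts the inner integrand in the shape of nn_integral_affine_sq *)
  have sq_norm: "(norm (zo_est n L1 s f x u v1 v2 v3))\<^sup>2 = ?K * (((F - f x + F * v2) + (- f x) * v3)\<^sup>2 + 0)"
    for v2 v3
    unfolding zo_est_def Let_def \<mu>_def[symmetric] unfolding noisy_def F_def[symmetric]
    by (simp add: power_mult_distrib power_divide algebra_simps)
  have "(\<integral>\<^sup>+v2. \<integral>\<^sup>+v3. ennreal ((norm (zo_est n L1 s f x u v1 v2 v3))\<^sup>2) \<partial>D \<partial>D)
      = (\<integral>\<^sup>+v2. \<integral>\<^sup>+v3. ennreal ?K * ennreal (((F - f x + F * v2) + (- f x) * v3)\<^sup>2 + 0) \<partial>D \<partial>D)"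
    unfolding sq_norm ennreal_mult'[OF K] ..
  also have "\<dots> = (\<integral>\<^sup>+v2. ennreal ?K * (\<integral>\<^sup>+v3. ennreal (((F - f x + F * v2) + (- f x) * v3)\<^sup>2 + 0) \<partial>D) \<partial>D)"
    by (intro nn_integral_cong nn_integral_cmult) simp
  also have "\<dots> = (\<integral>\<^sup>+v2. ennreal ?K * ennreal (((F - f x) + F * v2)\<^sup>2 + (f x)\<^sup>2 * \<sigma>\<^sup>2) \<partial>D)"
    by (subst nn_integral_affine_sq[OF var]) simp_all
  also have "\<dots> = ennreal ?K * (\<integral>\<^sup>+v2. ennreal (((F - f x) + F * v2)\<^sup>2 + (f x)\<^sup>2 * \<sigma>\<^sup>2) \<partial>D)"
    by (rule nn_integral_cmult) simp
  also have "\<dots> = ennreal ?K * ennreal ((F - f x)\<^sup>2 + F\<^sup>2 * \<sigma>\<^sup>2 + (f x)\<^sup>2 * \<sigma>\<^sup>2)"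
    by (subst nn_integral_affine_sq[OF var]) simp_all
  finally show ?thesis
    unfolding ennreal_mult'[OF K] .
qed

lemma nn_integral_zo_est_sq_given_direction:
  fixes f :: "'a::euclidean_space \<Rightarrow> real" and df :: "'a \<Rightarrow> 'a" and x u :: 'a
  assumes grad: "\<And>y. GDERIV f y :> df y"
    and lip0: "\<And>y z. \<bar>f y - f z\<bar> \<le> L0 * norm (y - z)"
    and lip1: "\<And>y z. norm (df y - df z) \<le> L1 * norm (y - z)"
    and var: "variance (\<lambda>v. v) = \<sigma>\<^sup>2"
    and inv_b: "expectation (\<lambda>v. 1 / (1 + v)) \<le> b"
    and c_pos: "0 < C4 n L1 s"
    and fx: "f x \<noteq> 0"
  shows "(\<integral>\<^sup>+v1. \<integral>\<^sup>+v2. \<integral>\<^sup>+v3. ennreal ((norm (zo_est n L1 s f x u v1 v2 v3))\<^sup>2) \<partial>D \<partial>D \<partial>D)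
       \<le> ennreal (2 * (df x \<bullet> u)\<^sup>2 * (norm u)\<^sup>2 + L1\<^sup>2 / 2 * (C4 n L1 s)\<^sup>2 * \<bar>f x\<bar> * (norm u)^6
                  + 2 * \<sigma>\<^sup>2 * L0\<^sup>2 * (norm u)^4 + b * (3 * \<sigma>\<^sup>2 * \<bar>f x\<bar> / (C4 n L1 s)\<^sup>2) * (norm u)\<^sup>2)"
proof -
  let ?\<mu> = "\<lambda>v1. C4 n L1 s * sqrt \<bar>noisy f x v1\<bar>"
  let ?Q = "\<lambda>v1. (norm u)\<^sup>2 / (?\<mu> v1)\<^sup>2 * ((f (x + ?\<mu> v1 *\<^sub>R u) - f x)\<^sup>2
      + (f (x + ?\<mu> v1 *\<^sub>R u))\<^sup>2 * \<sigma>\<^sup>2 + (f x)\<^sup>2 * \<sigma>\<^sup>2)"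
  have "(\<integral>\<^sup>+v1. \<integral>\<^sup>+v2. \<integral>\<^sup>+v3. ennreal ((norm (zo_est n L1 s f x u v1 v2 v3))\<^sup>2) \<partial>D \<partial>D \<partial>D)
      = (\<integral>\<^sup>+v1. ennreal (?Q v1) \<partial>D)"
    by (simp add: nn_integral_zo_est_sq_noise[OF var])
  also have "\<dots> \<le> ennreal ((2 * (df x \<bullet> u)\<^sup>2 * (norm u)\<^sup>2 + 2 * \<sigma>\<^sup>2 * L0\<^sup>2 * (norm u)^4)
      + L1\<^sup>2 / 2 * (C4 n L1 s)\<^sup>2 * \<bar>f x\<bar> * (norm u)^6
      + b * (3 * \<sigma>\<^sup>2 * \<bar>f x\<bar> / (C4 n L1 s)\<^sup>2 * (norm u)\<^sup>2))"
    using bound_less_one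
    by (intro nn_integral_le_of_inverse_shift_bound[OF inv_b] zo_noise_average_le_radius[OF grad lip0 lip1 c_pos fx])
       auto
  finally show ?thesis
    by (simp add: algebra_simps)
qed

lemma nn_integral_zo_est_sq_le:
  fixes f :: "'a::euclidean_space \<Rightarrow> real" and df :: "'a \<Rightarrow> 'a" and x :: 'a
  assumes grad: "\<And>y. GDERIV f y :> df y"
    and lip0: "\<And>y z. \<bar>f y - f z\<bar> \<le> L0 * norm (y - z)"
    and lip1: "\<And>y z. norm (df y - df z) \<le> L1 * norm (y - z)"
    and var: "variance (\<lambda>v. v) = \<sigma>\<^sup>2"
    and inv_b: "expectation (\<lambda>v. 1 / (1 + v)) \<le> b"
    and c_pos: "0 < C4 n L1 s"
    and fx: "f x \<noteq> 0"
  defines "d \<equiv> real DIM('a)"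
  shows "(\<integral>\<^sup>+ \<omega>. ennreal ((norm (zo_est n L1 s f x (fst \<omega>)
              (fst (snd \<omega>)) (fst (snd (snd \<omega>))) (snd (snd (snd \<omega>)))))\<^sup>2)
           \<partial>(std_gaussian \<Otimes>\<^sub>M (D \<Otimes>\<^sub>M (D \<Otimes>\<^sub>M D))))
       \<le> ennreal (2 * (d + 2) * (norm (df x))\<^sup>2
             + L1\<^sup>2 / 2 * (C4 n L1 s)\<^sup>2 * \<bar>f x\<bar> * (d * (d + 2) * (d + 4))
             + 2 * \<sigma>\<^sup>2 * L0\<^sup>2 * (d * (d + 2)) + b * (3 * \<sigma>\<^sup>2 * \<bar>f x\<bar> / (C4 n L1 s)\<^sup>2) * d)"
proof -
  have "isCont f y" for y
    using grad[of y] unfolding gderiv_def by (rule has_derivative_continuous)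
  then have [measurable]: "f \<in> borel_measurable borel"
    by (intro borel_measurable_continuous_onI continuous_at_imp_continuous_on) auto
  have sets_eq: "sets (std_gaussian \<Otimes>\<^sub>M (D \<Otimes>\<^sub>M (D \<Otimes>\<^sub>M D)))
      = sets ((borel :: 'a measure) \<Otimes>\<^sub>M (borel \<Otimes>\<^sub>M (borel \<Otimes>\<^sub>M borel)))"
    by (intro sets_pair_measure_cong) (simp_all add: std_gaussian_def sets_D)
  then have "(\<lambda>\<omega>. ennreal ((norm (zo_est n L1 s f x (fst \<omega>)
            (fst (snd \<omega>)) (fst (snd (snd \<omega>))) (snd (snd (snd \<omega>)))))\<^sup>2))
      \<in> borel_measurable (std_gaussian \<Otimes>\<^sub>M (D \<Otimes>\<^sub>M (D \<Otimes>\<^sub>M D)))"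
    unfolding measurable_cong_sets[OF sets_eq refl] zo_est_def noisy_def Let_def by measurable
  then have "(\<integral>\<^sup>+ \<omega>. ennreal ((norm (zo_est n L1 s f x (fst \<omega>)
            (fst (snd \<omega>)) (fst (snd (snd \<omega>))) (snd (snd (snd \<omega>)))))\<^sup>2)
         \<partial>(std_gaussian \<Otimes>\<^sub>M (D \<Otimes>\<^sub>M (D \<Otimes>\<^sub>M D))))
      = (\<integral>\<^sup>+u. \<integral>\<^sup>+v1. \<integral>\<^sup>+v2. \<integral>\<^sup>+v3. ennreal ((norm (zo_est n L1 s f x u v1 v2 v3))\<^sup>2)
           \<partial>D \<partial>D \<partial>D \<partial>std_gaussian)"
    using prob_space_imp_sigma_finite[OF prob_space_axioms]
    by (subst nn_integral_pair_measure4) simp_all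
  also have "\<dots> \<le> (\<integral>\<^sup>+u. ennreal (2 * (df x \<bullet> u)\<^sup>2 * (norm u)\<^sup>2
           + L1\<^sup>2 / 2 * (C4 n L1 s)\<^sup>2 * \<bar>f x\<bar> * (norm u)^6 + 2 * \<sigma>\<^sup>2 * L0\<^sup>2 * (norm u)^4
           + b * (3 * \<sigma>\<^sup>2 * \<bar>f x\<bar> / (C4 n L1 s)\<^sup>2) * (norm u)\<^sup>2) \<partial>std_gaussian)"
    by (intro nn_integral_mono nn_integral_zo_est_sq_given_direction[OF grad lip0 lip1 var inv_b c_pos fx])
  also have "\<dots> = ennreal (2 * (d + 2) * (norm (df x))\<^sup>2
           + L1\<^sup>2 / 2 * (C4 n L1 s)\<^sup>2 * \<bar>f x\<bar> * (d * (d + 2) * (d + 4))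
           + 2 * \<sigma>\<^sup>2 * L0\<^sup>2 * (d * (d + 2)) + b * (3 * \<sigma>\<^sup>2 * \<bar>f x\<bar> / (C4 n L1 s)\<^sup>2) * d)"
    using nn_integral_std_gaussian_moments[of 2 0 "L1\<^sup>2 / 2 * (C4 n L1 s)\<^sup>2 * \<bar>f x\<bar>"
        "2 * \<sigma>\<^sup>2 * L0\<^sup>2" "b * (3 * \<sigma>\<^sup>2 * \<bar>f x\<bar> / (C4 n L1 s)\<^sup>2)" 0 "df x"]
      expectation_inverse_shift_nonneg inv_b
    by (simp add: d_def)
  finally show ?thesis .
qed
end

lemma C4_sq:
  assumes "0 < n" "0 < L1" "0 < \<sigma>"
  shows "(C4 n L1 \<sigma>)\<^sup>2 * L1 * sqrt ((1 + 3 * \<sigma>\<^sup>2) * (n + 6) ^ 3) = 4 * \<sigma> * sqrt n"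
proof -
  let ?X = "16 * \<sigma>\<^sup>2 * n / (L1\<^sup>2 * (1 + 3 * \<sigma>\<^sup>2) * (n + 6) ^ 3)"
  have pos: "0 < (1 + 3 * \<sigma>\<^sup>2) * (n + 6) ^ 3"
    using assms by (intro mult_pos_pos) (auto intro: add_pos_nonneg)
  have "(C4 n L1 \<sigma>)\<^sup>2 = ?X powr (1/4) * ?X powr (1/4)"
    by (simp add: C4_def power2_eq_square)
  also have "\<dots> = sqrt ?X"
    using assms pos by (simp add: powr_add[symmetric] powr_half_sqrt)
  also have "\<dots> = 4 * \<sigma> * sqrt n / (L1 * sqrt ((1 + 3 * \<sigma>\<^sup>2) * (n + 6) ^ 3))"
    using assms by (simp add: real_sqrt_divide real_sqrt_mult mult.assoc)
  finally show ?thesis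
    using assms pos by (simp add: field_simps)
qed

lemma C4_pos:
  assumes "0 < n" "0 < L1" "0 < \<sigma>"
  shows "0 < C4 n L1 \<sigma>"
proof -
  have "0 < 1 + 3 * \<sigma>\<^sup>2"
    by (simp add: add_pos_nonneg)
  then show ?thesis
    using assms by (simp add: C4_def)
qed

lemma zo_constants_bound:
  fixes n L0 L1 \<sigma> b \<phi> G :: real
  assumes n: "1 \<le> n" and L1: "0 < L1" and \<sigma>: "0 < \<sigma>" and b: "0 \<le> b"
    and \<phi>: "0 \<le> \<phi>" and G: "0 \<le> G"
  defines "c \<equiv> C4 n L1 \<sigma>"
  shows "2 * (n + 2) * G + L1\<^sup>2 / 2 * c\<^sup>2 * \<phi> * (n * (n + 2) * (n + 4))
           + 2 * \<sigma>\<^sup>2 * L0\<^sup>2 * (n * (n + 2)) + b * (3 * \<sigma>\<^sup>2 * \<phi> / c\<^sup>2) * n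
         \<le> 2 * (n + 4) * G + C5 n L1 \<sigma> b * \<phi> + C6 n L0 \<sigma>"
proof -
  define K where "K = sqrt ((1 + 3 * \<sigma>\<^sup>2) * (n + 6) ^ 3)"
  have K: "0 < K"
    using n unfolding K_def by (intro real_sqrt_gt_zero mult_pos_pos) (auto intro: add_pos_nonneg)
  have cK: "c\<^sup>2 * L1 * K = 4 * \<sigma> * sqrt n"
    unfolding c_def K_def using n L1 \<sigma> by (intro C4_sq) auto
  have c: "0 < c\<^sup>2"
    using cK n L1 K \<sigma> by (cases "c = 0") auto
  have C5: "C5 n L1 \<sigma> b = 1 / 2 * c\<^sup>2 * L1\<^sup>2 * (n + 6) ^ 3 + (1 + b) * L1 * \<sigma> * (sqrt n * K)"
    by (simp add: C5_def c_def K_def real_sqrt_mult[symmetric] mult_ac)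
  have "2 * (n + 2) * G \<le> 2 * (n + 4) * G"
    using G by (intro mult_right_mono) auto
  moreover have "L1\<^sup>2 / 2 * c\<^sup>2 * \<phi> * (n * (n + 2) * (n + 4)) \<le> L1\<^sup>2 / 2 * c\<^sup>2 * \<phi> * (n + 6) ^ 3"
    using n \<phi> by (intro mult_left_mono) (auto simp: power3_eq_cube algebra_simps)
  moreover have "2 * \<sigma>\<^sup>2 * L0\<^sup>2 * (n * (n + 2)) \<le> C6 n L0 \<sigma>"
  proof -
    have "2 * (n * (n + 2)) \<le> 3 * (n + 4)\<^sup>2"
      using n by (simp add: power2_eq_square algebra_simps)
    then have "(\<sigma>\<^sup>2 * L0\<^sup>2) * (2 * (n * (n + 2))) \<le> (\<sigma>\<^sup>2 * L0\<^sup>2) * (3 * (n + 4)\<^sup>2)"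
      by (intro mult_left_mono) auto
    then show ?thesis
      unfolding C6_def by (simp add: algebra_simps)
  qed
  moreover have "b * (3 * \<sigma>\<^sup>2 * \<phi> / c\<^sup>2) * n \<le> (1 + b) * L1 * \<sigma> * (sqrt n * K) * \<phi>"
  proof -
    have sqrt_n: "sqrt n * sqrt n = n"
      using n by simp
    have "3 / 4 * b * (L1 * \<sigma> * (sqrt n * K) * \<phi>) = 3 / 4 * b * \<sigma> * \<phi> * sqrt n * (c\<^sup>2 * L1 * K) / c\<^sup>2"
      using c by (simp add: field_simps)
    also have "\<dots> = 3 * b * \<sigma>\<^sup>2 * \<phi> * (sqrt n * sqrt n) / c\<^sup>2"
      unfolding cK using c by (simp add: field_simps power2_eq_square)
    also have "\<dots> = b * (3 * \<sigma>\<^sup>2 * \<phi> / c\<^sup>2) * n"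
      unfolding sqrt_n by simp
    finally have "b * (3 * \<sigma>\<^sup>2 * \<phi> / c\<^sup>2) * n = 3 / 4 * b * (L1 * \<sigma> * (sqrt n * K) * \<phi>)" ..
    also have "\<dots> \<le> (1 + b) * (L1 * \<sigma> * (sqrt n * K) * \<phi>)"
      using b L1 \<sigma> K \<phi> n by (intro mult_right_mono) auto
    finally show ?thesis
      by (simp add: mult_ac)
  qed
  moreover have "C5 n L1 \<sigma> b * \<phi>
      = L1\<^sup>2 / 2 * c\<^sup>2 * \<phi> * (n + 6) ^ 3 + (1 + b) * L1 * \<sigma> * (sqrt n * K) * \<phi>"
    unfolding C5 by (simp add: algebra_simps)
  ultimately show ?thesis
    by linarith
qed

theorem lemma4:
  fixes f :: "'a::euclidean_space \<Rightarrow> real" and df :: "'a \<Rightarrow> 'a"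
    and D :: "real measure" and L0 L1 a b \<sigma> :: real and x :: 'a
  assumes convex: "convex_on UNIV f"
    and grad: "\<And>y. GDERIV f y :> df y"
    and grad_cont: "continuous_on UNIV df"
    and lip0: "\<And>y z. \<bar>f y - f z\<bar> \<le> L0 * norm (y - z)"
    and lip1: "\<And>y z. norm (df y - df z) \<le> L1 * norm (y - z)"
    and D_prob: "prob_space D" and D_sets: "sets D = sets borel"
    and a_lt: "a < 1" and supp: "AE v in D. v \<in> {-a..a}"
    and mean: "(\<integral>v. v \<partial>D) = 0"
    and var: "(\<integral>v. (v - (\<integral>w. w \<partial>D))\<^sup>2 \<partial>D) = \<sigma>\<^sup>2" and sigma_pos: "\<sigma> > 0"
    and inv_b: "(\<integral>v. 1 / (1 + v) \<partial>D) \<le> b"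
    and fx: "f x \<noteq> 0"
  shows "(\<integral>\<^sup>+ \<omega>. ennreal ((norm (zo_est (real DIM('a)) L1 \<sigma> f x (fst \<omega>)
              (fst (snd \<omega>)) (fst (snd (snd \<omega>))) (snd (snd (snd \<omega>)))))\<^sup>2)
           \<partial>(std_gaussian \<Otimes>\<^sub>M (D \<Otimes>\<^sub>M (D \<Otimes>\<^sub>M D))))
         \<le> ennreal (2 * (real DIM('a) + 4) * (norm (df x))\<^sup>2
                    + C5 (real DIM('a)) L1 \<sigma> b * \<bar>f x\<bar> + C6 (real DIM('a)) L0 \<sigma>)"
proof -
  interpret zero_mean_bounded_noise D a
    by (intro zero_mean_bounded_noise.intro zero_mean_bounded_noise_axioms.intro D_prob D_sets a_lt supp mean)
  define n where "n = real DIM('a)"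
  have n: "1 \<le> n"
    using DIM_positive[where 'a = 'a] by (simp add: n_def)
  consider "L1 = 0" | "0 < L1"
    using lipschitz_bound_nonneg[OF lip1] by fastforce
  then show ?thesis
  proof cases
    case 1
    (* C4 n 0 \<sigma> divides by zero, so the radius and with it the estimator vanish *)
    then show ?thesis
      by (simp add: zo_est_def C4_def)
  next
    case 2
    have "0 < C4 n L1 \<sigma>"
      using n 2 sigma_pos by (intro C4_pos) auto
    from nn_integral_zo_est_sq_le[OF grad lip0 lip1 var inv_b this fx]
    have "(\<integral>\<^sup>+ \<omega>. ennreal ((norm (zo_est n L1 \<sigma> f x (fst \<omega>)
              (fst (snd \<omega>)) (fst (snd (snd \<omega>))) (snd (snd (snd \<omega>)))))\<^sup>2)
           \<partial>(std_gaussian \<Otimes>\<^sub>M (D \<Otimes>\<^sub>M (D \<Otimes>\<^sub>M D))))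
        \<le> ennreal (2 * (n + 2) * (norm (df x))\<^sup>2
             + L1\<^sup>2 / 2 * (C4 n L1 \<sigma>)\<^sup>2 * \<bar>f x\<bar> * (n * (n + 2) * (n + 4))
             + 2 * \<sigma>\<^sup>2 * L0\<^sup>2 * (n * (n + 2)) + b * (3 * \<sigma>\<^sup>2 * \<bar>f x\<bar> / (C4 n L1 \<sigma>)\<^sup>2) * n)"
      by (simp add: n_def)
    also have "\<dots> \<le> ennreal (2 * (n + 4) * (norm (df x))\<^sup>2 + C5 n L1 \<sigma> b * \<bar>f x\<bar> + C6 n L0 \<sigma>)"
      using n 2 sigma_pos expectation_inverse_shift_nonneg inv_b
      by (intro ennreal_leI zo_constants_bound) auto
    finally show ?thesis
      by (simp add: n_def)
  qed
qed

end
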